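(* Let $X$ be a compact Hausdorff space. Then $X$ is discrete homogeneous if and only if $X$ is $n$-homogeneous for every positive integer $n$; and $X$ is strongly discrete homogeneous if and only if $X$ is strongly $n$-homogeneous for every positive integer $n$.
   Context: $X$ is $n$-homogeneous if for any two subsets $A,B\subseteq X$ of cardinality $n$ there is a homeomorphism $f\colon X\to X$ with $f(A)=B$; it is strongly $n$-homogeneous if every bijection between subsets of cardinality $n$ extends to a homeomorphism $X\to X$. A subset $D$ of $X$ is discrete if each point of $X$ has a neighbourhood containing at most one point of $D$. A Hausdorff space $X$ is discrete homogeneous (DH) if for any two discrete subsets $A,B$ with $|A|=|B|$ there is a homeomorphism $f\colon X\to X$ with $f(A)=B$; it is strongly discrete homogeneous (sDH) if for any two discrete subsets $A,B$ and any bijection $f\colon A\to B$, $f$ extends to a homeomorphism of $X$. *)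

theory Defs
  imports "HOL-Analysis.Analysis" "HOL-Library.Equipollence"
begin

definition n_homogeneous :: "'a topology \<Rightarrow> nat \<Rightarrow> bool" where
  "n_homogeneous X n \<longleftrightarrow>
     (\<forall>A B. A \<subseteq> topspace X \<and> B \<subseteq> topspace X \<and> finite A \<and> finite B
            \<and> card A = n \<and> card B = n
        \<longrightarrow> (\<exists>f. homeomorphic_map X X f \<and> f ` A = B))"

definition strongly_n_homogeneous :: "'a topology \<Rightarrow> nat \<Rightarrow> bool" where
  "strongly_n_homogeneous X n \<longleftrightarrow>
     (\<forall>A B g. A \<subseteq> topspace X \<and> B \<subseteq> topspace X \<and> finite A \<and> finite B
            \<and> card A = n \<and> card B = n \<and> bij_betw g A B
        \<longrightarrow> (\<exists>f. homeomorphic_map X X f \<and> (\<forall>x\<in>A. f x = g x)))"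

definition discrete_subset :: "'a topology \<Rightarrow> 'a set \<Rightarrow> bool" where
  "discrete_subset X D \<longleftrightarrow> D \<subseteq> topspace X \<and>
     (\<forall>x\<in>topspace X. \<exists>U. openin X U \<and> x \<in> U \<and>
        (\<forall>a\<in>U \<inter> D. \<forall>b\<in>U \<inter> D. a = b))"

definition discrete_homogeneous :: "'a topology \<Rightarrow> bool" where
  "discrete_homogeneous X \<longleftrightarrow> Hausdorff_space X \<and>
     (\<forall>A B. discrete_subset X A \<and> discrete_subset X B \<and> A \<approx> B
        \<longrightarrow> (\<exists>f. homeomorphic_map X X f \<and> f ` A = B))"

definition strongly_discrete_homogeneous :: "'a topology \<Rightarrow> bool" where
  "strongly_discrete_homogeneous X \<longleftrightarrow> Hausdorff_space X \<and>
     (\<forall>A B g. discrete_subset X A \<and> discrete_subset X B \<and> bij_betw g A B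
        \<longrightarrow> (\<exists>f. homeomorphic_map X X f \<and> (\<forall>x\<in>A. f x = g x)))"

end

theory Submission
  imports Defs
begin

text \<open>In a T1 space the discrete subsets in the sense of the paper are exactly the sets without
  accumulation points: the single stray point that a neighbourhood may contain can be cut out,
  since finite sets are closed. In a compact space such a set is finite by Bolzano-Weierstrass,
  and finite sets have no accumulation points. So for compact Hausdorff spaces the discrete
  subsets are the finite ones, and (strong) discrete homogeneity is (strong) \<open>n\<close>-homogeneity
  for all \<open>n\<close> at once; the case \<open>n = 0\<close> is trivial.\<close>

lemma discrete_subset_iff_derived_set_of_empty:
  assumes "t1_space X"
  shows "discrete_subset X D \<longleftrightarrow> D \<subseteq> topspace X \<and> X derived_set_of D = {}"
proof
  assume disc: "discrete_subset X D"
  have "x \<notin> X derived_set_of D" if x: "x \<in> topspace X" for x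
  proof -
    obtain U where U: "openin X U" "x \<in> U" and single: "\<forall>a\<in>U \<inter> D. \<forall>b\<in>U \<inter> D. a = b"
      using disc x unfolding discrete_subset_def by auto
    define F where "F = U \<inter> D - {x}"
    obtain a where "U \<inter> D \<subseteq> {a}"
      using single by blast
    then have "finite F"
      unfolding F_def by (simp add: finite_subset)
    moreover have "F \<subseteq> topspace X"
      using openin_subset[OF U(1)] unfolding F_def by blast
    ultimately have "closedin X F"
      using assms unfolding t1_space_closedin_finite by blast
    then have "openin X (U - F)"
      using U(1) by blast
    moreover have "x \<in> U - F" "D \<inter> (U - F) \<subseteq> {x}"
      using U(2) unfolding F_def by auto
    ultimately show ?thesis
      unfolding in_derived_set_of by auto
  qed
  then have "X derived_set_of D = {}"
    using derived_set_of_subset_topspace[of X D] by auto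
  then show "D \<subseteq> topspace X \<and> X derived_set_of D = {}"
    using disc unfolding discrete_subset_def by simp
next
  assume D: "D \<subseteq> topspace X \<and> X derived_set_of D = {}"
  have "\<exists>U. openin X U \<and> x \<in> U \<and> (\<forall>a\<in>U \<inter> D. \<forall>b\<in>U \<inter> D. a = b)"
    if x: "x \<in> topspace X" for x
  proof -
    have "x \<notin> X derived_set_of D"
      using D by simp
    then obtain U where "openin X U" "x \<in> U" "\<forall>y\<in>U. y \<in> D \<longrightarrow> y = x"
      using x unfolding in_derived_set_of by auto
    then show ?thesis
      by auto
  qed
  then show "discrete_subset X D"
    using D unfolding discrete_subset_def by simp
qed

lemma discrete_subset_iff_finite:
  assumes "compact_space X" "t1_space X"
  shows "discrete_subset X D \<longleftrightarrow> D \<subseteq> topspace X \<and> finite D"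
  using assms compact_space_imp_Bolzano_Weierstrass t1_space_derived_set_of_finite
  by (metis discrete_subset_iff_derived_set_of_empty)

lemma n_homogeneous_0: "n_homogeneous X 0"
  unfolding n_homogeneous_def by (auto intro!: exI[of _ id] homeomorphic_map_id)

lemma strongly_n_homogeneous_0: "strongly_n_homogeneous X 0"
  unfolding strongly_n_homogeneous_def by (auto intro!: exI[of _ id] homeomorphic_map_id)

lemma discrete_homogeneous_iff_n_homogeneous:
  assumes "compact_space X" "Hausdorff_space X"
  shows "discrete_homogeneous X \<longleftrightarrow> (\<forall>n. n_homogeneous X n)"
proof -
  have disc: "discrete_subset X D \<longleftrightarrow> D \<subseteq> topspace X \<and> finite D" for D
    using assms Hausdorff_imp_t1_space discrete_subset_iff_finite by blast
  show ?thesis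
  proof
    assume H: "discrete_homogeneous X"
    show "\<forall>n. n_homogeneous X n"
      unfolding n_homogeneous_def
    proof (intro allI impI, elim conjE)
      fix n A B
      assume "A \<subseteq> topspace X" "B \<subseteq> topspace X" "finite A" "finite B" "card A = n" "card B = n"
      then show "\<exists>f. homeomorphic_map X X f \<and> f ` A = B"
        using H unfolding discrete_homogeneous_def disc by (simp add: eqpoll_iff_card)
    qed
  next
    assume H: "\<forall>n. n_homogeneous X n"
    show "discrete_homogeneous X"
      unfolding discrete_homogeneous_def disc
    proof (intro conjI allI impI, fact, elim conjE)
      fix A B
      assume "A \<subseteq> topspace X" "finite A" "B \<subseteq> topspace X" "finite B" "A \<approx> B"
      then show "\<exists>f. homeomorphic_map X X f \<and> f ` A = B"
        using H unfolding n_homogeneous_def by (simp add: eqpoll_iff_card)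
    qed
  qed
qed

lemma strongly_discrete_homogeneous_iff_strongly_n_homogeneous:
  assumes "compact_space X" "Hausdorff_space X"
  shows "strongly_discrete_homogeneous X \<longleftrightarrow> (\<forall>n. strongly_n_homogeneous X n)"
proof -
  have disc: "discrete_subset X D \<longleftrightarrow> D \<subseteq> topspace X \<and> finite D" for D
    using assms Hausdorff_imp_t1_space discrete_subset_iff_finite by blast
  show ?thesis
  proof
    assume H: "strongly_discrete_homogeneous X"
    show "\<forall>n. strongly_n_homogeneous X n"
      unfolding strongly_n_homogeneous_def
    proof (intro allI impI, elim conjE)
      fix n A B g
      assume "A \<subseteq> topspace X" "B \<subseteq> topspace X" "finite A" "finite B" "bij_betw g A B"
      then show "\<exists>f. homeomorphic_map X X f \<and> (\<forall>x\<in>A. f x = g x)"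
        using H unfolding strongly_discrete_homogeneous_def disc by simp
    qed
  next
    assume H: "\<forall>n. strongly_n_homogeneous X n"
    show "strongly_discrete_homogeneous X"
      unfolding strongly_discrete_homogeneous_def disc
    proof (intro conjI allI impI, fact, elim conjE)
      fix A B g
      assume "A \<subseteq> topspace X" "finite A" "B \<subseteq> topspace X" "finite B" "bij_betw g A B"
      moreover have "card A = card B"
        using \<open>bij_betw g A B\<close> by (rule bij_betw_same_card)
      ultimately show "\<exists>f. homeomorphic_map X X f \<and> (\<forall>x\<in>A. f x = g x)"
        using H unfolding strongly_n_homogeneous_def by simp
    qed
  qed
qed

theorem mainTheorem11:
  fixes X :: "'a topology"
  assumes "compact_space X" and "Hausdorff_space X"
  shows "(discrete_homogeneous X \<longleftrightarrow> (\<forall>n::nat. n \<ge> 1 \<longrightarrow> n_homogeneous X n))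
       \<and> (strongly_discrete_homogeneous X \<longleftrightarrow>
            (\<forall>n::nat. n \<ge> 1 \<longrightarrow> strongly_n_homogeneous X n))"
proof -
  have from_one: "(\<forall>n::nat. n \<ge> 1 \<longrightarrow> P n) \<longleftrightarrow> (\<forall>n. P n)" if "P 0" for P
    using that not_less_eq_eq by auto
  show ?thesis
    using from_one[of "n_homogeneous X", OF n_homogeneous_0]
      from_one[of "strongly_n_homogeneous X", OF strongly_n_homogeneous_0]
      discrete_homogeneous_iff_n_homogeneous[OF assms]
      strongly_discrete_homogeneous_iff_strongly_n_homogeneous[OF assms]
    by simp
qed

end
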